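(* Let $\mathcal C$ be a category, $n\ge0$, $0\le i\le n$, and let $f:A\to B$ be a zigzag map in $Z(\mathcal C)$ from a zigzag $A$ of length $n$ to a zigzag $B$ of length $n+1$ whose singular map is the face map $d_i:[n]\to[n+1]$ (so its regular slices are $f(r_j):A(r_j)\to B(r_j)$ for $j\le i$ and $f(r_j):A(r_{j-1})\to B(r_j)$ for $j\ge i+1$, and its singular slices are $f(s_j):A(s_j)\to B(s_{d_i(j)})$). Then $f$ is $\pi$-cartesian if and only if all singular slices $f(s_j)$ are isomorphisms in $\mathcal C$, all regular slices $f(r_j)$ with $j\notin\{i,i+1\}$ are isomorphisms in $\mathcal C$, and the commutative square formed by $f(r_i):A(r_i)\to B(r_i)$, $f(r_{i+1}):A(r_i)\to B(r_{i+1})$ and the cospan legs $b_i:B(r_i)\to B(s_i)$, $b'_i:B(r_{i+1})\to B(s_i)$ is a pullback square in $\mathcal C$.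
   Context: Notation: for $n\ge 0$, $[n]$ denotes $\{0,\dots,n-1\}$; $\Delta_+$ is the category of these finite total orders and order-preserving maps. The $i$-th face map $d_i:[n]\to[n+1]$ is the unique injective order-preserving map omitting $i$ from its image. For monotone $\varphi:[n]\to[m]$ define $\hat\varphi:[m+1]\to[n+1]$ by $\hat\varphi(i)=\min(\{j\in[n]:\varphi(j)\ge i\}\cup\{n\})$. Zigzags: in a category $\mathcal C$, a zigzag $X$ of length $n$ is a diagram $X(r_0)\xrightarrow{x_0} X(s_0)\xleftarrow{x'_0} X(r_1)\to\cdots\xrightarrow{x_{n-1}} X(s_{n-1})\xleftarrow{x'_{n-1}} X(r_n)$. A zigzag map $f:X\to Y$ (lengths $n$, $m$) consists of a monotone $f_s:[n]\to[m]$ (singular map), regular slices $f(r_i):X(r_{\hat{f_s}(i)})\to Y(r_i)$ for $0\le i\le m$ and singular slices $f(s_j):X(s_j)\to Y(s_{f_s(j)})$ for $0\le j<n$, such that for each $0\le i<m$: if $f_s^{-1}(i)\neq\emptyset$ with least element $p$, greatest $q$, then $f(s_p)\circ x_p=y_i\circ f(r_i)$, $f(s_q)\circ x'_q=y'_i\circ f(r_{i+1})$, $f(s_j)\circ x'_j=f(s_{j+1})\circ x_{j+1}$ for $p\le j<q$; if $f_s^{-1}(i)=\emptyset$ then $y_i\circ f(r_i)=y'_i\circ f(r_{i+1})$. Composition: $(g\circ f)_s=g_s\circ f_s$, $(g\circ f)(s_j)=g(s_{f_s(j)})\circ f(s_j)$, $(g\circ f)(r_i)=g(r_i)\circ f(r_{\hat{g_s}(i)})$.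 This gives the category $Z(\mathcal C)$. The functor $\pi:Z(\mathcal C)\to\Delta_+$ sends a zigzag of length $n$ to $[n]$ and $f$ to $f_s$. A map $f:x\to y$ is $\pi$-cartesian if for every map $h:x'\to y$ and every $u:\pi(x')\to\pi(x)$ with $\pi(f)\circ u=\pi(h)$ there is a unique $v:x'\to x$ with $f\circ v=h$ and $\pi(v)=u$. *)

theory Defs
  imports Main
begin

record ('o, 'm) category =
  Ob    :: "'o set"
  Ar    :: "'m set"
  cdom  :: "'m \<Rightarrow> 'o"
  ccod  :: "'m \<Rightarrow> 'o"
  ccomp :: "'m \<Rightarrow> 'm \<Rightarrow> 'm"   (* ccomp C g f = g o f *)
  cid   :: "'o \<Rightarrow> 'm"

definition hom :: "('o,'m) category \<Rightarrow> 'm \<Rightarrow> 'o \<Rightarrow> 'o \<Rightarrow> bool" where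
  "hom C f a b \<longleftrightarrow> f \<in> Ar C \<and> cdom C f = a \<and> ccod C f = b"

definition category :: "('o,'m) category \<Rightarrow> bool" where
  "category C \<longleftrightarrow>
     (\<forall>f\<in>Ar C. cdom C f \<in> Ob C \<and> ccod C f \<in> Ob C) \<and>
     (\<forall>a\<in>Ob C. hom C (cid C a) a a) \<and>
     (\<forall>f\<in>Ar C. \<forall>g\<in>Ar C. ccod C f = cdom C g \<longrightarrow>
        hom C (ccomp C g f) (cdom C f) (ccod C g)) \<and>
     (\<forall>f\<in>Ar C. \<forall>g\<in>Ar C. \<forall>h\<in>Ar C. ccod C f = cdom C g \<longrightarrow> ccod C g = cdom C h \<longrightarrow>
        ccomp C h (ccomp C g f) = ccomp C (ccomp C h g) f) \<and>
     (\<forall>f\<in>Ar C. ccomp C f (cid C (cdom C f)) = f \<and> ccomp C (cid C (ccod C f)) f = f)"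

definition iso :: "('o,'m) category \<Rightarrow> 'm \<Rightarrow> bool" where
  "iso C f \<longleftrightarrow> f \<in> Ar C \<and> (\<exists>g. hom C g (ccod C f) (cdom C f) \<and>
      ccomp C g f = cid C (cdom C f) \<and> ccomp C f g = cid C (ccod C f))"

definition is_pullback :: "('o,'m) category \<Rightarrow> 'm \<Rightarrow> 'm \<Rightarrow> 'm \<Rightarrow> 'm \<Rightarrow> bool" where
  "is_pullback C p1 p2 g1 g2 \<longleftrightarrow>
     p1 \<in> Ar C \<and> p2 \<in> Ar C \<and> g1 \<in> Ar C \<and> g2 \<in> Ar C \<and>
     cdom C p1 = cdom C p2 \<and> ccod C p1 = cdom C g1 \<and> ccod C p2 = cdom C g2 \<and>
     ccod C g1 = ccod C g2 \<and>
     ccomp C g1 p1 = ccomp C g2 p2 \<and>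
     (\<forall>q1 q2. q1 \<in> Ar C \<and> q2 \<in> Ar C \<and> cdom C q1 = cdom C q2 \<and>
        ccod C q1 = cdom C g1 \<and> ccod C q2 = cdom C g2 \<and> ccomp C g1 q1 = ccomp C g2 q2 \<longrightarrow>
        (\<exists>!u. hom C u (cdom C q1) (cdom C p1) \<and> ccomp C p1 u = q1 \<and> ccomp C p2 u = q2))"

text \<open>A zigzag of length n: regular objects reg 0..n, singular objects sing 0..n-1,
  forward legs fwd j : reg j \<rightarrow> sing j, backward legs bwd j : reg (j+1) \<rightarrow> sing j.\<close>
record ('o, 'm) zigzag =
  zlen :: nat
  reg  :: "nat \<Rightarrow> 'o"
  sing :: "nat \<Rightarrow> 'o"
  fwd  :: "nat \<Rightarrow> 'm"
  bwd  :: "nat \<Rightarrow> 'm"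

definition zigzag :: "('o,'m) category \<Rightarrow> ('o,'m) zigzag \<Rightarrow> bool" where
  "zigzag C X \<longleftrightarrow>
     (\<forall>i\<le>zlen X. reg X i \<in> Ob C) \<and> (\<forall>j<zlen X. sing X j \<in> Ob C) \<and>
     (\<forall>j<zlen X. hom C (fwd X j) (reg X j) (sing X j) \<and> hom C (bwd X j) (reg X (Suc j)) (sing X j))"

definition hat :: "nat \<Rightarrow> (nat \<Rightarrow> nat) \<Rightarrow> nat \<Rightarrow> nat" where
  "hat n \<phi> i = (if \<exists>j<n. i \<le> \<phi> j then (LEAST j. j < n \<and> i \<le> \<phi> j) else n)"

text \<open>A morphism of Z(C), carrying its source and target zigzags. Components outside
  their index ranges are fixed (0 / undefined) so that equality of maps is equality of data.\<close>
record ('o, 'm) zmap =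
  zsrc :: "('o,'m) zigzag"
  ztgt :: "('o,'m) zigzag"
  smap :: "nat \<Rightarrow> nat"
  rsl  :: "nat \<Rightarrow> 'm"
  ssl  :: "nat \<Rightarrow> 'm"

definition monotone_map :: "nat \<Rightarrow> nat \<Rightarrow> (nat \<Rightarrow> nat) \<Rightarrow> bool" where
  "monotone_map n m \<phi> \<longleftrightarrow> (\<forall>j<n. \<phi> j < m) \<and> (\<forall>j k. j \<le> k \<and> k < n \<longrightarrow> \<phi> j \<le> \<phi> k)"

definition is_zmap :: "('o,'m) category \<Rightarrow> ('o,'m) zmap \<Rightarrow> bool" where
  "is_zmap C f \<longleftrightarrow>
    (let X = zsrc f; Y = ztgt f; n = zlen X; m = zlen Y; \<phi> = smap f in
     zigzag C X \<and> zigzag C Y \<and> monotone_map n m \<phi> \<and>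
     (\<forall>j\<ge>n. \<phi> j = 0) \<and> (\<forall>i>m. rsl f i = undefined) \<and> (\<forall>j\<ge>n. ssl f j = undefined) \<and>
     (\<forall>i\<le>m. hom C (rsl f i) (reg X (hat n \<phi> i)) (reg Y i)) \<and>
     (\<forall>j<n. hom C (ssl f j) (sing X j) (sing Y (\<phi> j))) \<and>
     (\<forall>i<m. let P = {j. j < n \<and> \<phi> j = i} in
        (P \<noteq> {} \<longrightarrow>
           ccomp C (ssl f (Min P)) (fwd X (Min P)) = ccomp C (fwd Y i) (rsl f i) \<and>
           ccomp C (ssl f (Max P)) (bwd X (Max P)) = ccomp C (bwd Y i) (rsl f (Suc i)) \<and>
           (\<forall>j. Min P \<le> j \<and> j < Max P \<longrightarrow>
              ccomp C (ssl f j) (bwd X j) = ccomp C (ssl f (Suc j)) (fwd X (Suc j)))) \<and>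
        (P = {} \<longrightarrow> ccomp C (fwd Y i) (rsl f i) = ccomp C (bwd Y i) (rsl f (Suc i)))))"

definition zcomp :: "('o,'m) category \<Rightarrow> ('o,'m) zmap \<Rightarrow> ('o,'m) zmap \<Rightarrow> ('o,'m) zmap" where
  "zcomp C g f =
    \<lparr> zsrc = zsrc f, ztgt = ztgt g,
      smap = (\<lambda>j. if j < zlen (zsrc f) then smap g (smap f j) else 0),
      rsl = (\<lambda>i. if i \<le> zlen (ztgt g)
                 then ccomp C (rsl g i) (rsl f (hat (zlen (zsrc g)) (smap g) i)) else undefined),
      ssl = (\<lambda>j. if j < zlen (zsrc f) then ccomp C (ssl g (smap f j)) (ssl f j) else undefined) \<rparr>"

definition pi_cartesian :: "('o,'m) category \<Rightarrow> ('o,'m) zmap \<Rightarrow> bool" where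
  "pi_cartesian C f \<longleftrightarrow>
    (\<forall>h u. is_zmap C h \<and> ztgt h = ztgt f \<and>
        monotone_map (zlen (zsrc h)) (zlen (zsrc f)) u \<and>
        (\<forall>j<zlen (zsrc h). smap f (u j) = smap h j) \<longrightarrow>
       (\<exists>!v. is_zmap C v \<and> zsrc v = zsrc h \<and> ztgt v = zsrc f \<and>
             (\<forall>j<zlen (zsrc h). smap v j = u j) \<and> zcomp C f v = h))"

definition face :: "nat \<Rightarrow> nat \<Rightarrow> nat" where
  "face i j = (if j < i then j else Suc j)"

end

theory Submission
  imports Defs
begin

text \<open>
  Write A and B for the source and target of f. If the singular slices of f and its regular
  slices away from i, i+1 are invertible, a map h into B over d_i \<circ> u has at most one lift
  through f over u: all its slices are forced by these inverses, except the regular slice at i,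
  which is forced by the pullback property. Conversely these slices define a lift, and its
  squares commute because they do so after composing with the invertible singular slices of f.

  For the other direction, a cone (q1, q2) over the cospan B(r_i) \<rightarrow> B(s_i) \<leftarrow> B(r_(i+1)) with
  apex Q is the same thing as a map over d_i into B from the zigzag obtained from B by collapsing
  r_i, s_i, r_(i+1) to Q, with identities as all other slices. Lifting it through f produces the
  mediating map Q \<rightarrow> A(r_i); lifting the cone (f(r_i), f(r_(i+1))) produces inverses of the remaining
  slices of f, since f factors through that cone and, by uniqueness of lifts of f along the
  identity, the composite of the lift with the factor is the identity of A.
\<close>

locale cat =
  fixes C :: "('o,'m) category"
  assumes category: "category C"
begin

abbreviation comp (infixr "\<cdot>" 55) where "g \<cdot> f \<equiv> ccomp C g f"

lemma comp_hom: "hom C f a b \<Longrightarrow> hom C g b c \<Longrightarrow> hom C (g \<cdot> f) a c"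
  using category unfolding category_def hom_def by metis

lemma comp_assoc: "hom C f a b \<Longrightarrow> hom C g b c \<Longrightarrow> hom C h c d \<Longrightarrow> (h \<cdot> g) \<cdot> f = h \<cdot> (g \<cdot> f)"
  using category unfolding category_def hom_def by metis

lemma hom_dom_Ob: "hom C f a b \<Longrightarrow> a \<in> Ob C"
  using category unfolding category_def hom_def by metis

lemma cid_hom: "a \<in> Ob C \<Longrightarrow> hom C (cid C a) a a"
  using category unfolding category_def by metis

lemma comp_cid_left: "hom C f a b \<Longrightarrow> cid C b \<cdot> f = f"
  using category unfolding category_def hom_def by metis

lemma comp_cid_right: "hom C f a b \<Longrightarrow> f \<cdot> cid C a = f"
  using category unfolding category_def hom_def by metis

definition cinv :: "'m \<Rightarrow> 'm" where
  "cinv f = (SOME g. hom C g (ccod C f) (cdom C f) \<and>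
      g \<cdot> f = cid C (cdom C f) \<and> f \<cdot> g = cid C (ccod C f))"

lemma cinv:
  assumes "iso C f" "hom C f a b"
  shows cinv_hom: "hom C (cinv f) b a"
    and cinv_comp: "cinv f \<cdot> f = cid C a"
    and comp_cinv: "f \<cdot> cinv f = cid C b"
proof -
  have "hom C (cinv f) (ccod C f) (cdom C f) \<and>
      cinv f \<cdot> f = cid C (cdom C f) \<and> f \<cdot> cinv f = cid C (ccod C f)"
    unfolding cinv_def by (rule someI_ex) (use assms(1) in \<open>simp add: iso_def\<close>)
  with assms(2) show "hom C (cinv f) b a" "cinv f \<cdot> f = cid C a" "f \<cdot> cinv f = cid C b"
    unfolding hom_def by auto
qed

lemma isoI: "hom C f a b \<Longrightarrow> hom C g b a \<Longrightarrow> g \<cdot> f = cid C a \<Longrightarrow> f \<cdot> g = cid C b \<Longrightarrow> iso C f"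
  unfolding iso_def hom_def by auto

lemma iso_cid: "a \<in> Ob C \<Longrightarrow> iso C (cid C a)"
  using isoI[OF cid_hom cid_hom] comp_cid_left[OF cid_hom] by blast

lemma iso_cancel_left:
  assumes "iso C f" "hom C f a b" "hom C x c a" "hom C y c' a" "f \<cdot> x = f \<cdot> y"
  shows "x = y"
proof -
  have "x = (cinv f \<cdot> f) \<cdot> x"
    using assms(1-3) by (simp add: cinv_comp comp_cid_left)
  also have "\<dots> = cinv f \<cdot> (f \<cdot> y)"
    using comp_assoc[OF assms(3,2) cinv_hom[OF assms(1,2)]] assms(5) by simp
  also have "\<dots> = (cinv f \<cdot> f) \<cdot> y"
    using comp_assoc[OF assms(4,2) cinv_hom[OF assms(1,2)]] by simp
  also have "\<dots> = y"
    using assms(1,2,4) by (simp add: cinv_comp comp_cid_left)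
  finally show ?thesis .
qed

lemma comp_cinv_cancel:
  assumes "iso C f" "hom C f a b" "hom C y c b"
  shows "f \<cdot> (cinv f \<cdot> y) = y"
  using comp_assoc[OF assms(3) cinv_hom[OF assms(1,2)] assms(2)]
  by (simp add: comp_cinv[OF assms(1,2)] comp_cid_left[OF assms(3)])

lemma square_paste:
  assumes "hom C x a b" "hom C r1 a a'" "hom C s1 b b'" "hom C y a' b'"
    and "hom C r2 a' a''" "hom C s2 b' b''" "hom C z a'' b''"
    and "s1 \<cdot> x = y \<cdot> r1" "s2 \<cdot> y = z \<cdot> r2"
  shows "(s2 \<cdot> s1) \<cdot> x = z \<cdot> (r2 \<cdot> r1)"
proof -
  have "(s2 \<cdot> s1) \<cdot> x = s2 \<cdot> (y \<cdot> r1)"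
    using comp_assoc[OF assms(1,3,6)] assms(8) by simp
  also have "\<dots> = (z \<cdot> r2) \<cdot> r1"
    using comp_assoc[OF assms(2,4,6)] assms(9) by simp
  also have "\<dots> = z \<cdot> (r2 \<cdot> r1)"
    using comp_assoc[OF assms(2,5,7)] .
  finally show ?thesis .
qed

lemma is_pullback_universal:
  assumes "is_pullback C p1 p2 g1 g2" "hom C q1 Q (cdom C g1)" "hom C q2 Q (cdom C g2)"
    and "g1 \<cdot> q1 = g2 \<cdot> q2"
  shows "\<exists>!u. hom C u Q (cdom C p1) \<and> p1 \<cdot> u = q1 \<and> p2 \<cdot> u = q2"
proof -
  have "\<forall>q1 q2. q1 \<in> Ar C \<and> q2 \<in> Ar C \<and> cdom C q1 = cdom C q2 \<and> ccod C q1 = cdom C g1 \<and>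
      ccod C q2 = cdom C g2 \<and> g1 \<cdot> q1 = g2 \<cdot> q2 \<longrightarrow>
      (\<exists>!u. hom C u (cdom C q1) (cdom C p1) \<and> p1 \<cdot> u = q1 \<and> p2 \<cdot> u = q2)"
    using assms(1) unfolding is_pullback_def by (elim conjE)
  moreover have "q1 \<in> Ar C \<and> q2 \<in> Ar C \<and> cdom C q1 = cdom C q2 \<and> ccod C q1 = cdom C g1 \<and>
      ccod C q2 = cdom C g2 \<and> g1 \<cdot> q1 = g2 \<cdot> q2"
    using assms(2-4) by (simp add: hom_def)
  moreover have "cdom C q1 = Q"
    using assms(2) by (simp add: hom_def)
  ultimately show ?thesis
    by simp
qed

lemma pullback_homs:
  assumes "is_pullback C p1 p2 g1 g2"
  shows "hom C p1 (cdom C p1) (cdom C g1)" "hom C p2 (cdom C p1) (cdom C g2)"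
    and "hom C g1 (cdom C g1) (ccod C g1)" "hom C g2 (cdom C g2) (ccod C g1)"
    and "g1 \<cdot> p1 = g2 \<cdot> p2"
  using assms unfolding is_pullback_def hom_def by auto

definition pullback_lift :: "'m \<Rightarrow> 'm \<Rightarrow> 'm \<Rightarrow> 'm \<Rightarrow> 'm" where
  "pullback_lift p1 p2 q1 q2 =
     (THE u. hom C u (cdom C q1) (cdom C p1) \<and> p1 \<cdot> u = q1 \<and> p2 \<cdot> u = q2)"

lemma pullback_lift:
  assumes "is_pullback C p1 p2 g1 g2" "hom C g1 X Z" "hom C g2 Y Z"
    and "hom C q1 Q X" "hom C q2 Q Y" "g1 \<cdot> q1 = g2 \<cdot> q2"
  shows pullback_lift_of_hom: "hom C (pullback_lift p1 p2 q1 q2) Q (cdom C p1)"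
    and pullback_lift_fst: "p1 \<cdot> pullback_lift p1 p2 q1 q2 = q1"
    and pullback_lift_snd: "p2 \<cdot> pullback_lift p1 p2 q1 q2 = q2"
proof -
  have "\<exists>!u. hom C u Q (cdom C p1) \<and> p1 \<cdot> u = q1 \<and> p2 \<cdot> u = q2"
    using assms by (intro is_pullback_universal) (auto simp: hom_def)
  moreover have "cdom C q1 = Q"
    using assms(4) by (simp add: hom_def)
  ultimately show "hom C (pullback_lift p1 p2 q1 q2) Q (cdom C p1)"
    "p1 \<cdot> pullback_lift p1 p2 q1 q2 = q1" "p2 \<cdot> pullback_lift p1 p2 q1 q2 = q2"
    unfolding pullback_lift_def using theI'[of "\<lambda>u. hom C u Q (cdom C p1) \<and> p1 \<cdot> u = q1 \<and> p2 \<cdot> u = q2"]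
    by simp_all
qed

lemma pullback_jointly_monic:
  assumes "is_pullback C p1 p2 g1 g2" "hom C w Q (cdom C p1)" "hom C w' Q (cdom C p1)"
    and "p1 \<cdot> w = p1 \<cdot> w'" "p2 \<cdot> w = p2 \<cdot> w'"
  shows "w = w'"
proof -
  note homs = pullback_homs[OF assms(1)]
  have "g1 \<cdot> (p1 \<cdot> w) = g2 \<cdot> (p2 \<cdot> w)"
    using comp_assoc[OF assms(2) homs(1,3)] comp_assoc[OF assms(2) homs(2,4)] homs(5) by metis
  then have "\<exists>!u. hom C u Q (cdom C p1) \<and> p1 \<cdot> u = p1 \<cdot> w \<and> p2 \<cdot> u = p2 \<cdot> w"
    using assms(1) comp_hom[OF assms(2) homs(1)] comp_hom[OF assms(2) homs(2)]
    by (intro is_pullback_universal)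
  then show ?thesis
    using the1_equality assms(2-5) by metis
qed

lemma is_pullbackI:
  assumes "hom C p1 P X" "hom C p2 P Y" "hom C g1 X Z" "hom C g2 Y Z" "g1 \<cdot> p1 = g2 \<cdot> p2"
    and "\<And>Q q1 q2. hom C q1 Q X \<Longrightarrow> hom C q2 Q Y \<Longrightarrow> g1 \<cdot> q1 = g2 \<cdot> q2 \<Longrightarrow>
           \<exists>!u. hom C u Q P \<and> p1 \<cdot> u = q1 \<and> p2 \<cdot> u = q2"
  shows "is_pullback C p1 p2 g1 g2"
proof -
  have P: "cdom C p1 = P"
    using assms(1) by (simp add: hom_def)
  show ?thesis
    unfolding is_pullback_def
  proof (intro conjI allI impI)
    fix q1 q2
    assume "q1 \<in> Ar C \<and> q2 \<in> Ar C \<and> cdom C q1 = cdom C q2 \<and> ccod C q1 = cdom C g1 \<and>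
      ccod C q2 = cdom C g2 \<and> g1 \<cdot> q1 = g2 \<cdot> q2"
    then show "\<exists>!u. hom C u (cdom C q1) (cdom C p1) \<and> p1 \<cdot> u = q1 \<and> p2 \<cdot> u = q2"
      unfolding P using assms(3,4) by (intro assms(6)) (auto simp: hom_def)
  qed (use assms(1-5) in \<open>auto simp: hom_def\<close>)
qed

end

lemma zigzag_homs:
  assumes "zigzag C X" "j < zlen X"
  shows "hom C (fwd X j) (reg X j) (sing X j)" "hom C (bwd X j) (reg X (Suc j)) (sing X j)"
  using assms by (simp_all add: zigzag_def)

definition degen :: "nat \<Rightarrow> nat \<Rightarrow> nat" where
  "degen i k = (if k \<le> i then k else k - 1)"

lemma face_neq [simp]: "face i j \<noteq> i"
  by (simp add: face_def)

lemma face_eq_iff [simp]: "face i j = face i j' \<longleftrightarrow> j = j'"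
  by (auto simp: face_def)

lemma face_less_Suc: "j < n \<Longrightarrow> face i j < Suc n"
  by (simp add: face_def)

lemma degen_face [simp]: "degen i (face i j) = j"
  by (simp add: degen_def face_def)

lemma degen_Suc_face [simp]: "degen i (Suc (face i j)) = Suc j"
  by (simp add: degen_def face_def)

lemma face_degen: "k \<noteq> i \<Longrightarrow> face i (degen i k) = k"
  by (auto simp: degen_def face_def)

lemma degen_eq_iff: "degen i k = i \<longleftrightarrow> k = i \<or> k = Suc i"
  by (auto simp: degen_def)

lemma degen_le: "i \<le> n \<Longrightarrow> k \<le> Suc n \<Longrightarrow> degen i k \<le> n"
  by (auto simp: degen_def)

lemma le_face_iff: "k \<le> face i j \<longleftrightarrow> degen i k \<le> j"
  by (auto simp: degen_def face_def)

lemma hat_cong: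
  assumes "\<And>j. j < n \<Longrightarrow> k \<le> \<phi> j \<longleftrightarrow> k' \<le> \<psi> j"
  shows "hat n \<phi> k = hat n \<psi> k'"
  unfolding hat_def using assms by (auto intro!: arg_cong[where f = Least])

lemma hat_le: "hat n \<phi> k \<le> n"
  unfolding hat_def by (auto intro: Least_le order.trans[OF _ less_imp_le] dest: LeastI_ex)

lemma hat_id:
  assumes "\<And>j. j < n \<Longrightarrow> \<phi> j = j" "k \<le> n"
  shows "hat n \<phi> k = k"
proof -
  have "hat n \<phi> k = hat n (\<lambda>j. j) k"
    using assms(1) by (intro hat_cong) simp
  also have "\<dots> = k"
    using assms(2) unfolding hat_def by (cases "k < n") (auto intro!: Least_equality)
  finally show ?thesis .
qed

lemma hat_face_comp:
  assumes "\<And>j. j < m \<Longrightarrow> \<phi> j = face i (u j)"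
  shows "hat m \<phi> k = hat m u (degen i k)"
  using assms by (intro hat_cong) (simp add: le_face_iff)

lemma hat_face:
  assumes "\<And>j. j < n \<Longrightarrow> \<phi> j = face i j" "i \<le> n" "k \<le> Suc n"
  shows "hat n \<phi> k = degen i k"
  using hat_face_comp[of n \<phi> i "\<lambda>j. j"] hat_id[of n "\<lambda>j. j"] degen_le assms by simp

definition zmap_data :: "('o,'m) category \<Rightarrow> ('o,'m) zmap \<Rightarrow> bool" where
  "zmap_data C f \<longleftrightarrow> zigzag C (zsrc f) \<and> zigzag C (ztgt f) \<and>
     monotone_map (zlen (zsrc f)) (zlen (ztgt f)) (smap f) \<and>
     (\<forall>j\<ge>zlen (zsrc f). smap f j = 0) \<and> (\<forall>k>zlen (ztgt f). rsl f k = undefined) \<and>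
     (\<forall>j\<ge>zlen (zsrc f). ssl f j = undefined) \<and>
     (\<forall>k\<le>zlen (ztgt f).
        hom C (rsl f k) (reg (zsrc f) (hat (zlen (zsrc f)) (smap f) k)) (reg (ztgt f) k)) \<and>
     (\<forall>j<zlen (zsrc f). hom C (ssl f j) (sing (zsrc f) j) (sing (ztgt f) (smap f j)))"

definition fibre_commutes :: "('o,'m) category \<Rightarrow> ('o,'m) zmap \<Rightarrow> nat \<Rightarrow> bool" where
  "fibre_commutes C f k \<longleftrightarrow> (let P = {j. j < zlen (zsrc f) \<and> smap f j = k} in
     (P \<noteq> {} \<longrightarrow>
        ccomp C (ssl f (Min P)) (fwd (zsrc f) (Min P)) = ccomp C (fwd (ztgt f) k) (rsl f k) \<and>
        ccomp C (ssl f (Max P)) (bwd (zsrc f) (Max P)) = ccomp C (bwd (ztgt f) k) (rsl f (Suc k)) \<and>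
        (\<forall>j. Min P \<le> j \<and> j < Max P \<longrightarrow>
           ccomp C (ssl f j) (bwd (zsrc f) j) = ccomp C (ssl f (Suc j)) (fwd (zsrc f) (Suc j)))) \<and>
     (P = {} \<longrightarrow> ccomp C (fwd (ztgt f) k) (rsl f k) = ccomp C (bwd (ztgt f) k) (rsl f (Suc k))))"

definition zmap_commutes :: "('o,'m) category \<Rightarrow> ('o,'m) zmap \<Rightarrow> bool" where
  "zmap_commutes C f \<longleftrightarrow> (\<forall>k<zlen (ztgt f). fibre_commutes C f k)"

lemma is_zmap_iff: "is_zmap C f \<longleftrightarrow> zmap_data C f \<and> zmap_commutes C f"
  unfolding is_zmap_def zmap_data_def zmap_commutes_def fibre_commutes_def Let_def by blast

definition vertical :: "('o,'m) zmap \<Rightarrow> bool" where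
  "vertical f \<longleftrightarrow> zlen (ztgt f) = zlen (zsrc f) \<and> (\<forall>j<zlen (zsrc f). smap f j = j)"

lemma zmap_data_vertical_iff:
  assumes "vertical f" "zlen (zsrc f) = n"
  shows "zmap_data C f \<longleftrightarrow> zigzag C (zsrc f) \<and> zigzag C (ztgt f) \<and>
     (\<forall>j\<ge>n. smap f j = 0) \<and> (\<forall>k>n. rsl f k = undefined) \<and> (\<forall>j\<ge>n. ssl f j = undefined) \<and>
     (\<forall>k\<le>n. hom C (rsl f k) (reg (zsrc f) k) (reg (ztgt f) k)) \<and>
     (\<forall>j<n. hom C (ssl f j) (sing (zsrc f) j) (sing (ztgt f) j))"
proof -
  have "hat n (smap f) k = k" if "k \<le> n" for k
    using assms that by (intro hat_id) (auto simp: vertical_def)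
  then show ?thesis
    using assms unfolding zmap_data_def vertical_def monotone_map_def by auto
qed

lemma zmap_commutes_vertical_iff:
  assumes "vertical f" "zlen (zsrc f) = n"
  shows "zmap_commutes C f \<longleftrightarrow>
    (\<forall>j<n. ccomp C (ssl f j) (fwd (zsrc f) j) = ccomp C (fwd (ztgt f) j) (rsl f j) \<and>
           ccomp C (ssl f j) (bwd (zsrc f) j) = ccomp C (bwd (ztgt f) j) (rsl f (Suc j)))"
proof -
  have lens: "zlen (zsrc f) = n" "zlen (ztgt f) = n"
    using assms by (auto simp: vertical_def)
  have "{j. j < n \<and> smap f j = k} = {k}" if "k < n" for k
    using assms that by (auto simp: vertical_def)
  then show ?thesis
    unfolding zmap_commutes_def fibre_commutes_def lens by (intro all_cong) (auto simp: Let_def)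
qed

lemma zmap_data_face_iff:
  assumes "zlen (zsrc f) = n" "zlen (ztgt f) = Suc n" "i \<le> n" "\<forall>j<n. smap f j = face i j"
  shows "zmap_data C f \<longleftrightarrow> zigzag C (zsrc f) \<and> zigzag C (ztgt f) \<and>
     (\<forall>j\<ge>n. smap f j = 0) \<and> (\<forall>k>Suc n. rsl f k = undefined) \<and> (\<forall>j\<ge>n. ssl f j = undefined) \<and>
     (\<forall>k\<le>Suc n. hom C (rsl f k) (reg (zsrc f) (degen i k)) (reg (ztgt f) k)) \<and>
     (\<forall>j<n. hom C (ssl f j) (sing (zsrc f) j) (sing (ztgt f) (face i j)))"
proof -
  have "monotone_map n (Suc n) (smap f)"
    using assms(4) unfolding monotone_map_def face_def by auto
  moreover have "hat n (smap f) k = degen i k" if "k \<le> Suc n" for k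
    using assms(3,4) that by (intro hat_face) auto
  ultimately show ?thesis
    using assms unfolding zmap_data_def by auto
qed

lemma zmap_commutes_face_iff:
  assumes "zlen (zsrc f) = n" "zlen (ztgt f) = Suc n" "i \<le> n" "\<forall>j<n. smap f j = face i j"
  shows "zmap_commutes C f \<longleftrightarrow>
    (\<forall>j<n. ccomp C (ssl f j) (fwd (zsrc f) j) = ccomp C (fwd (ztgt f) (face i j)) (rsl f (face i j)) \<and>
           ccomp C (ssl f j) (bwd (zsrc f) j) =
             ccomp C (bwd (ztgt f) (face i j)) (rsl f (Suc (face i j)))) \<and>
    ccomp C (fwd (ztgt f) i) (rsl f i) = ccomp C (bwd (ztgt f) i) (rsl f (Suc i))"
    (is "_ \<longleftrightarrow> (\<forall>j<n. ?square (face i j) j) \<and> ?cospan")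
proof -
  have degen_less: "degen i k < n" if "k < Suc n" "k \<noteq> i" for k
    using assms(3) that by (auto simp: degen_def)
  have "{j. j < n \<and> smap f j = k} = (if k = i then {} else {degen i k})" if "k < Suc n" for k
    using assms(4) degen_less[OF that] face_degen by auto
  then have "zmap_commutes C f \<longleftrightarrow> (\<forall>k<Suc n. (k = i \<longrightarrow> ?cospan) \<and> (k \<noteq> i \<longrightarrow> ?square k (degen i k)))"
    unfolding zmap_commutes_def fibre_commutes_def assms(1,2) by (intro all_cong) (auto simp: Let_def)
  also have "\<dots> \<longleftrightarrow> (\<forall>j<n. ?square (face i j) j) \<and> ?cospan"
    using assms(3) degen_less face_degen face_less_Suc by (metis degen_face face_neq le_imp_less_Suc)
  finally show ?thesis .
qed

lemma zsrc_zcomp [simp]: "zsrc (zcomp C f v) = zsrc v"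
  and ztgt_zcomp [simp]: "ztgt (zcomp C f v) = ztgt f"
  by (simp_all add: zcomp_def)

lemma zcomp_eq_iff:
  assumes "zmap_data C h" "zsrc h = zsrc v" "ztgt h = ztgt f"
    and "\<forall>j<zlen (zsrc v). smap h j = smap f (smap v j)"
  shows "zcomp C f v = h \<longleftrightarrow>
    (\<forall>j<zlen (zsrc v). ccomp C (ssl f (smap v j)) (ssl v j) = ssl h j) \<and>
    (\<forall>k\<le>zlen (ztgt f). ccomp C (rsl f k) (rsl v (hat (zlen (zsrc f)) (smap f) k)) = rsl h k)"
    (is "_ \<longleftrightarrow> ?slices")
proof
  assume "?slices"
  with assms show "zcomp C f v = h"
    unfolding zcomp_def zmap_data_def by (intro zmap.equality) (auto simp: fun_eq_iff)
qed (auto simp: zcomp_def)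

lemma zmap_eqI:
  assumes "zmap_data C v" "zmap_data C w" "zsrc v = zsrc w" "ztgt v = ztgt w"
    and "\<forall>j<zlen (zsrc v). smap v j = smap w j" "\<forall>k\<le>zlen (ztgt v). rsl v k = rsl w k"
    and "\<forall>j<zlen (zsrc v). ssl v j = ssl w j"
  shows "v = w"
proof (rule zmap.equality)
  show "smap v = smap w"
  proof
    fix j show "smap v j = smap w j"
      using assms unfolding zmap_data_def by (cases "j < zlen (zsrc v)") auto
  qed
  show "rsl v = rsl w"
  proof
    fix k show "rsl v k = rsl w k"
      using assms unfolding zmap_data_def by (cases "k \<le> zlen (ztgt v)") auto
  qed
  show "ssl v = ssl w"
  proof
    fix j show "ssl v j = ssl w j"
      using assms unfolding zmap_data_def by (cases "j < zlen (zsrc v)") auto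
  qed
qed (use assms in auto)

lemma zcomp_vertical_slices:
  shows "vertical v \<Longrightarrow> k \<le> zlen (zsrc v) \<Longrightarrow> rsl (zcomp C v g) k = ccomp C (rsl v k) (rsl g k)"
    and "vertical g \<Longrightarrow> j < zlen (zsrc g) \<Longrightarrow> ssl (zcomp C v g) j = ccomp C (ssl v j) (ssl g j)"
  using hat_id[of "zlen (zsrc v)" "smap v" k] by (simp_all add: zcomp_def vertical_def)

definition zid :: "('o,'m) category \<Rightarrow> ('o,'m) zigzag \<Rightarrow> ('o,'m) zmap" where
  "zid C X = \<lparr>zsrc = X, ztgt = X, smap = \<lambda>j. if j < zlen X then j else 0,
     rsl = \<lambda>k. if k \<le> zlen X then cid C (reg X k) else undefined,
     ssl = \<lambda>j. if j < zlen X then cid C (sing X j) else undefined\<rparr>"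

lemma vertical_zid: "vertical (zid C X)"
  by (simp add: vertical_def zid_def)

context cat
begin

lemma is_zmap_zid:
  assumes "zigzag C X"
  shows "is_zmap C (zid C X)"
proof -
  have "zmap_data C (zid C X)"
    using assms by (subst zmap_data_vertical_iff[OF vertical_zid refl])
      (simp add: zid_def zigzag_def cid_hom)
  moreover have "zmap_commutes C (zid C X)"
    using assms by (subst zmap_commutes_vertical_iff[OF vertical_zid refl])
      (auto simp: zid_def zigzag_def comp_cid_left comp_cid_right)
  ultimately show ?thesis
    by (simp add: is_zmap_iff)
qed

lemma zcomp_zid:
  assumes "is_zmap C f"
  shows "zcomp C f (zid C (zsrc f)) = f"
proof -
  have data: "zmap_data C f"
    using assms by (simp add: is_zmap_iff)
  show ?thesis
  proof (subst zcomp_eq_iff[OF data])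
    show "(\<forall>j<zlen (zsrc (zid C (zsrc f))). ssl f (smap (zid C (zsrc f)) j) \<cdot> ssl (zid C (zsrc f)) j = ssl f j) \<and>
      (\<forall>k\<le>zlen (ztgt f). rsl f k \<cdot> rsl (zid C (zsrc f)) (hat (zlen (zsrc f)) (smap f) k) = rsl f k)"
      using data hat_le unfolding zmap_data_def by (auto simp: zid_def comp_cid_right)
  qed (simp_all add: zid_def)
qed

lemma zcomp_vertical:
  assumes "is_zmap C v" "is_zmap C g" "vertical v" "vertical g" "zsrc v = ztgt g"
  shows "is_zmap C (zcomp C v g)" and "vertical (zcomp C v g)"
proof -
  define n where "n = zlen (zsrc g)"
  have lens: "zlen (zsrc v) = n" "zlen (ztgt v) = n" "zlen (ztgt g) = n"
    using assms(3-5) by (simp_all add: vertical_def n_def)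
  note v = assms(1)[unfolded is_zmap_iff zmap_data_vertical_iff[OF assms(3) lens(1)]
      zmap_commutes_vertical_iff[OF assms(3) lens(1)]]
  note g = assms(2)[unfolded is_zmap_iff zmap_data_vertical_iff[OF assms(4) n_def[symmetric]]
      zmap_commutes_vertical_iff[OF assms(4) n_def[symmetric]]]
  have vg: "vertical (zcomp C v g)" and len: "zlen (zsrc (zcomp C v g)) = n"
    using assms(3-5) by (simp_all add: vertical_def zcomp_def n_def)
  from vg show "vertical (zcomp C v g)" .
  have rsl: "rsl (zcomp C v g) k = rsl v k \<cdot> rsl g k" if "k \<le> n" for k
    using zcomp_vertical_slices(1)[OF assms(3)] that lens by simp
  have ssl: "ssl (zcomp C v g) j = ssl v j \<cdot> ssl g j" if "j < n" for j
    using zcomp_vertical_slices(2)[OF assms(4)] that by (simp add: n_def)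
  have gS: "\<And>j. j < n \<Longrightarrow> hom C (ssl g j) (sing (zsrc g) j) (sing (zsrc v) j)"
    and vS: "\<And>j. j < n \<Longrightarrow> hom C (ssl v j) (sing (zsrc v) j) (sing (ztgt v) j)"
    and gR: "\<And>k. k \<le> n \<Longrightarrow> hom C (rsl g k) (reg (zsrc g) k) (reg (zsrc v) k)"
    and vR: "\<And>k. k \<le> n \<Longrightarrow> hom C (rsl v k) (reg (zsrc v) k) (reg (ztgt v) k)"
    using v g assms(5) by auto
  have "zmap_data C (zcomp C v g)"
    unfolding zmap_data_vertical_iff[OF vg len]
    using v g comp_hom[OF gR vR] comp_hom[OF gS vS] rsl ssl lens
    by (auto simp: zcomp_def n_def)
  moreover have "zmap_commutes C (zcomp C v g)"
    unfolding zmap_commutes_vertical_iff[OF vg len]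
  proof (intro allI impI conjI)
    fix j assume j: "j < n"
    have j': "j \<le> n" "Suc j \<le> n"
      using j by auto
    note legs = zigzag_homs[of C _ j]
    show "ssl (zcomp C v g) j \<cdot> fwd (zsrc (zcomp C v g)) j =
        fwd (ztgt (zcomp C v g)) j \<cdot> rsl (zcomp C v g) j"
      using square_paste[OF legs(1) gR[OF j'(1)] gS[OF j] legs(1) vR[OF j'(1)] vS[OF j] legs(1)]
        v g j j' lens assms(5) rsl ssl by (simp add: n_def)
    show "ssl (zcomp C v g) j \<cdot> bwd (zsrc (zcomp C v g)) j =
        bwd (ztgt (zcomp C v g)) j \<cdot> rsl (zcomp C v g) (Suc j)"
      using square_paste[OF legs(2) gR[OF j'(2)] gS[OF j] legs(2) vR[OF j'(2)] vS[OF j] legs(2)]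
        v g j j' lens assms(5) rsl ssl by (simp add: n_def)
  qed
  ultimately show "is_zmap C (zcomp C v g)"
    by (simp add: is_zmap_iff)
qed

lemma zcomp_assoc_vertical:
  assumes "zmap_data C f" "zmap_data C v" "zmap_data C g" "vertical v" "vertical g"
    and "zsrc f = ztgt v" "zsrc v = ztgt g"
  shows "zcomp C f (zcomp C v g) = zcomp C (zcomp C f v) g"
proof -
  define n where "n = zlen (zsrc g)"
  have lens: "zlen (zsrc v) = n" "zlen (ztgt v) = n" "zlen (zsrc f) = n"
    using assms(4-7) by (simp_all add: vertical_def n_def)
  note v = assms(2)[unfolded zmap_data_vertical_iff[OF assms(4) lens(1)]]
  note g = assms(3)[unfolded zmap_data_vertical_iff[OF assms(5) n_def[symmetric]]]
  have fR: "hom C (rsl f k) (reg (zsrc f) (hat n (smap f) k)) (reg (ztgt f) k)"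
    if "k \<le> zlen (ztgt f)" for k
    using assms(1) that lens unfolding zmap_data_def by simp
  have fS: "hom C (ssl f j) (sing (zsrc f) j) (sing (ztgt f) (smap f j))" if "j < n" for j
    using assms(1) that lens unfolding zmap_data_def by simp
  have hat_v: "hat n (smap v) k = k" if "k \<le> n" for k
    using assms(4) lens that by (intro hat_id) (auto simp: vertical_def)
  have hat_fv: "hat n (\<lambda>j. if j < n then smap f (smap v j) else 0) k = hat n (smap f) k" for k
    using assms(4) lens by (intro hat_cong) (simp add: vertical_def)
  show ?thesis
  proof (rule zmap.equality)
    show "smap (zcomp C f (zcomp C v g)) = smap (zcomp C (zcomp C f v) g)"
      using assms(4,5,7) lens by (auto simp: zcomp_def vertical_def n_def fun_eq_iff)
    show "rsl (zcomp C f (zcomp C v g)) = rsl (zcomp C (zcomp C f v) g)"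
    proof
      fix k
      let ?h = "hat n (smap f) k"
      have h: "?h \<le> n"
        by (rule hat_le)
      show "rsl (zcomp C f (zcomp C v g)) k = rsl (zcomp C (zcomp C f v) g) k"
      proof (cases "k \<le> zlen (ztgt f)")
        case True
        have "hom C (rsl g ?h) (reg (zsrc g) ?h) (reg (ztgt g) ?h)"
          "hom C (rsl v ?h) (reg (ztgt g) ?h) (reg (ztgt v) ?h)"
          "hom C (rsl f k) (reg (ztgt v) ?h) (reg (ztgt f) k)"
          using v g h fR[OF True] assms(6,7) by auto
        then have "rsl f k \<cdot> (rsl v ?h \<cdot> rsl g ?h) = (rsl f k \<cdot> rsl v ?h) \<cdot> rsl g ?h"
          by (simp add: comp_assoc)
        then show ?thesis
          using True h hat_v hat_fv lens by (simp add: zcomp_def n_def)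
      qed (simp add: zcomp_def)
    qed
    show "ssl (zcomp C f (zcomp C v g)) = ssl (zcomp C (zcomp C f v) g)"
    proof
      fix j
      show "ssl (zcomp C f (zcomp C v g)) j = ssl (zcomp C (zcomp C f v) g) j"
      proof (cases "j < n")
        case True
        have "hom C (ssl g j) (sing (zsrc g) j) (sing (ztgt g) j)"
          "hom C (ssl v j) (sing (ztgt g) j) (sing (ztgt v) j)"
          "hom C (ssl f j) (sing (ztgt v) j) (sing (ztgt f) (smap f j))"
          using v g True fS[OF True] assms(6,7) by auto
        then have "ssl f j \<cdot> (ssl v j \<cdot> ssl g j) = (ssl f j \<cdot> ssl v j) \<cdot> ssl g j"
          by (simp add: comp_assoc)
        then show ?thesis
          using True assms(4,5) lens by (simp add: zcomp_def vertical_def n_def)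
      qed (simp add: zcomp_def n_def)
    qed
  qed (simp_all add: zcomp_def)
qed

end

locale face_zmap = cat C for C :: "('o,'m) category" +
  fixes f :: "('o,'m) zmap" and n i :: nat
  assumes is_zmap: "is_zmap C f"
    and src_len: "zlen (zsrc f) = n" and tgt_len: "zlen (ztgt f) = Suc n"
    and face_le: "i \<le> n" and smap_face: "\<forall>j<n. smap f j = face i j"
begin

abbreviation A where "A \<equiv> zsrc f"
abbreviation B where "B \<equiv> ztgt f"

lemma slice_homs:
  shows zigzag_src: "zigzag C A" and zigzag_tgt: "zigzag C B"
    and rsl_hom: "k \<le> Suc n \<Longrightarrow> hom C (rsl f k) (reg A (degen i k)) (reg B k)"
    and ssl_hom: "j < n \<Longrightarrow> hom C (ssl f j) (sing A j) (sing B (face i j))"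
  using is_zmap unfolding is_zmap_iff zmap_data_face_iff[OF src_len tgt_len face_le smap_face]
  by auto

lemma slice_squares:
  shows fwd_square: "j < n \<Longrightarrow> ssl f j \<cdot> fwd A j = fwd B (face i j) \<cdot> rsl f (face i j)"
    and bwd_square: "j < n \<Longrightarrow> ssl f j \<cdot> bwd A j = bwd B (face i j) \<cdot> rsl f (Suc (face i j))"
    and cospan_square: "fwd B i \<cdot> rsl f i = bwd B i \<cdot> rsl f (Suc i)"
  using is_zmap unfolding is_zmap_iff zmap_commutes_face_iff[OF src_len tgt_len face_le smap_face]
  by auto

lemma leg_homs:
  shows src_fwd_hom: "j < n \<Longrightarrow> hom C (fwd A j) (reg A j) (sing A j)"
    and src_bwd_hom: "j < n \<Longrightarrow> hom C (bwd A j) (reg A (Suc j)) (sing A j)"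
    and tgt_fwd_hom: "k \<le> n \<Longrightarrow> hom C (fwd B k) (reg B k) (sing B k)"
    and tgt_bwd_hom: "k \<le> n \<Longrightarrow> hom C (bwd B k) (reg B (Suc k)) (sing B k)"
  using zigzag_homs[OF zigzag_src] zigzag_homs[OF zigzag_tgt] src_len tgt_len by auto

lemma tgt_Ob: "k \<le> Suc n \<Longrightarrow> reg B k \<in> Ob C" "k < Suc n \<Longrightarrow> sing B k \<in> Ob C"
  using zigzag_tgt tgt_len by (simp_all add: zigzag_def)

lemma degen_self [simp]: "degen i i = i" "degen i (Suc i) = i"
  by (simp_all add: degen_def)

lemma zcomp_slices:
  shows "j < zlen (zsrc v) \<Longrightarrow> smap (zcomp C f v) j = smap f (smap v j)"
    and "j < zlen (zsrc v) \<Longrightarrow> ssl (zcomp C f v) j = ssl f (smap v j) \<cdot> ssl v j"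
    and "k \<le> Suc n \<Longrightarrow> rsl (zcomp C f v) k = rsl f k \<cdot> rsl v (degen i k)"
  using hat_face[OF _ face_le, of "smap f"] smap_face src_len tgt_len
  by (simp_all add: zcomp_def)

lemma zcomp_reg_legs:
  assumes "zmap_data C v" "ztgt v = A" "k < n"
  defines "c \<equiv> \<lambda>k. reg (zsrc v) (hat (zlen (zsrc v)) (smap v) k)"
  shows "hom C (fwd A k \<cdot> rsl v k) (c k) (sing A k)"
    and "hom C (bwd A k \<cdot> rsl v (Suc k)) (c (Suc k)) (sing A k)"
    and "ssl f k \<cdot> (fwd A k \<cdot> rsl v k) = fwd B (face i k) \<cdot> rsl (zcomp C f v) (face i k)"
    and "ssl f k \<cdot> (bwd A k \<cdot> rsl v (Suc k)) =
      bwd B (face i k) \<cdot> rsl (zcomp C f v) (Suc (face i k))"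
proof -
  have vR: "hom C (rsl v k') (c k') (reg A k')" if "k' \<le> n" for k'
    using assms(1,2) that src_len unfolding zmap_data_def c_def by auto
  have k: "k \<le> n" "Suc k \<le> n" "face i k \<le> Suc n" "Suc (face i k) \<le> Suc n" "face i k \<le> n"
    using assms(3) by (auto simp: face_def)
  show "hom C (fwd A k \<cdot> rsl v k) (c k) (sing A k)"
    "hom C (bwd A k \<cdot> rsl v (Suc k)) (c (Suc k)) (sing A k)"
    using comp_hom[OF vR src_fwd_hom[OF assms(3)]] comp_hom[OF vR src_bwd_hom[OF assms(3)]] k by simp_all
  have "ssl f k \<cdot> (fwd A k \<cdot> rsl v k) = (fwd B (face i k) \<cdot> rsl f (face i k)) \<cdot> rsl v k"
    using comp_assoc[OF vR[OF k(1)] src_fwd_hom[OF assms(3)] ssl_hom[OF assms(3)]]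
    by (simp add: fwd_square[OF assms(3)])
  also have "\<dots> = fwd B (face i k) \<cdot> rsl (zcomp C f v) (face i k)"
    using comp_assoc[OF vR[OF k(1)] _ tgt_fwd_hom[OF k(5)]] rsl_hom[OF k(3)]
    by (simp add: zcomp_slices(3)[OF k(3)])
  finally show "ssl f k \<cdot> (fwd A k \<cdot> rsl v k) = fwd B (face i k) \<cdot> rsl (zcomp C f v) (face i k)" .
  have "ssl f k \<cdot> (bwd A k \<cdot> rsl v (Suc k)) =
      (bwd B (face i k) \<cdot> rsl f (Suc (face i k))) \<cdot> rsl v (Suc k)"
    using comp_assoc[OF vR[OF k(2)] src_bwd_hom[OF assms(3)] ssl_hom[OF assms(3)]]
    by (simp add: bwd_square[OF assms(3)])
  also have "\<dots> = bwd B (face i k) \<cdot> rsl (zcomp C f v) (Suc (face i k))"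
    using comp_assoc[OF vR[OF k(2)] _ tgt_bwd_hom[OF k(5)]] rsl_hom[OF k(4)]
    by (simp add: zcomp_slices(3)[OF k(4)])
  finally show "ssl f k \<cdot> (bwd A k \<cdot> rsl v (Suc k)) =
      bwd B (face i k) \<cdot> rsl (zcomp C f v) (Suc (face i k))" .
qed

lemma zcomp_sing_legs:
  assumes "zmap_data C v" "ztgt v = A" "j < zlen (zsrc v)" "smap v j = k"
  shows "hom C (ssl v j \<cdot> fwd (zsrc v) j) (reg (zsrc v) j) (sing A k)"
    and "hom C (ssl v j \<cdot> bwd (zsrc v) j) (reg (zsrc v) (Suc j)) (sing A k)"
    and "ssl f k \<cdot> (ssl v j \<cdot> fwd (zsrc v) j) = ssl (zcomp C f v) j \<cdot> fwd (zsrc v) j"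
    and "ssl f k \<cdot> (ssl v j \<cdot> bwd (zsrc v) j) = ssl (zcomp C f v) j \<cdot> bwd (zsrc v) j"
proof -
  have vS: "hom C (ssl v j) (sing (zsrc v) j) (sing A k)"
    and fS: "hom C (ssl f k) (sing A k) (sing B (face i k))"
    using assms ssl_hom src_len unfolding zmap_data_def monotone_map_def by auto
  have legs: "hom C (fwd (zsrc v) j) (reg (zsrc v) j) (sing (zsrc v) j)"
    "hom C (bwd (zsrc v) j) (reg (zsrc v) (Suc j)) (sing (zsrc v) j)"
    using assms zigzag_homs unfolding zmap_data_def by auto
  show "hom C (ssl v j \<cdot> fwd (zsrc v) j) (reg (zsrc v) j) (sing A k)"
    "hom C (ssl v j \<cdot> bwd (zsrc v) j) (reg (zsrc v) (Suc j)) (sing A k)"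
    using comp_hom[OF legs(1) vS] comp_hom[OF legs(2) vS] .
  show "ssl f k \<cdot> (ssl v j \<cdot> fwd (zsrc v) j) = ssl (zcomp C f v) j \<cdot> fwd (zsrc v) j"
    "ssl f k \<cdot> (ssl v j \<cdot> bwd (zsrc v) j) = ssl (zcomp C f v) j \<cdot> bwd (zsrc v) j"
    using comp_assoc[OF legs(1) vS fS] comp_assoc[OF legs(2) vS fS] zcomp_slices(2)[OF assms(3)] assms(4)
    by simp_all
qed

lemma zcomp_reflects_fibre_commutes:
  assumes iso: "iso C (ssl f k)" and k: "k < n"
    and v: "zmap_data C v" "ztgt v = A" and h: "fibre_commutes C (zcomp C f v) (face i k)"
  shows "fibre_commutes C v k"
proof -
  define P where "P = {j. j < zlen (zsrc v) \<and> smap v j = k}"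
  have "{j. j < zlen (zsrc v) \<and> smap (zcomp C f v) j = face i k} = P"
    using v src_len by (auto simp: P_def zcomp_slices(1) smap_face zmap_data_def monotone_map_def)
  note h' = h[unfolded fibre_commutes_def Let_def zsrc_zcomp ztgt_zcomp this]
  note cancel = iso_cancel_left[OF iso ssl_hom[OF k]]
  note reg_legs = zcomp_reg_legs[OF v k]
  note sing_legs = zcomp_sing_legs[OF v]
  have MinMax: "Min P \<in> P" "Max P \<in> P" if "P \<noteq> {}"
    using that Min_in[of P] Max_in[of P] by (simp_all add: P_def)
  have interval: "j \<in> P" "Suc j \<in> P" if "Min P \<le> j" "j < Max P" "P \<noteq> {}" for j
  proof -
    have mono: "a \<le> b \<Longrightarrow> b < zlen (zsrc v) \<Longrightarrow> smap v a \<le> smap v b" for a b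
      using v(1) unfolding zmap_data_def monotone_map_def by blast
    have "smap v (Min P) \<le> smap v j" "smap v j \<le> smap v (Suc j)" "smap v (Suc j) \<le> smap v (Max P)"
      using MinMax[OF that(3)] that(1,2) mono[of "Min P" j] mono[of j "Suc j"] mono[of "Suc j" "Max P"]
      by (auto simp: P_def)
    then show "j \<in> P" "Suc j \<in> P"
      using MinMax[OF that(3)] that(1,2) by (auto simp: P_def)
  qed
  show ?thesis
    unfolding fibre_commutes_def Let_def P_def[symmetric] v(2)
  proof (intro conjI impI allI)
    assume ne: "P \<noteq> {}"
    show "ssl v (Min P) \<cdot> fwd (zsrc v) (Min P) = fwd A k \<cdot> rsl v k"
      using cancel[OF sing_legs(1) reg_legs(1)] sing_legs(3) reg_legs(3) h' ne MinMax(1)[OF ne]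
      by (simp add: P_def)
    show "ssl v (Max P) \<cdot> bwd (zsrc v) (Max P) = bwd A k \<cdot> rsl v (Suc k)"
      using cancel[OF sing_legs(2) reg_legs(2)] sing_legs(4) reg_legs(4) h' ne MinMax(2)[OF ne]
      by (simp add: P_def)
    fix j assume j: "Min P \<le> j \<and> j < Max P"
    show "ssl v j \<cdot> bwd (zsrc v) j = ssl v (Suc j) \<cdot> fwd (zsrc v) (Suc j)"
      using cancel[OF sing_legs(2) sing_legs(1)] sing_legs(3,4) h' ne j interval[of j]
      by (simp add: P_def)
  next
    assume "P = {}"
    then show "fwd A k \<cdot> rsl v k = bwd A k \<cdot> rsl v (Suc k)"
      using cancel[OF reg_legs(1,2)] reg_legs(3,4) h' by simp
  qed
qed

lemma zcomp_reflects_commutes: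
  assumes "\<forall>j<n. iso C (ssl f j)" "zmap_data C v" "ztgt v = A" "is_zmap C (zcomp C f v)"
  shows "zmap_commutes C v"
  unfolding zmap_commutes_def
proof (intro allI impI)
  fix k assume "k < zlen (ztgt v)"
  then have "k < n" "face i k < zlen (ztgt (zcomp C f v))"
    using assms(3) src_len tgt_len face_less_Suc by simp_all
  then show "fibre_commutes C v k"
    using assms zcomp_reflects_fibre_commutes unfolding is_zmap_iff zmap_commutes_def by blast
qed

lemma zcomp_eq_iff_face:
  assumes "zmap_data C h" "zsrc h = zsrc v" "ztgt h = B"
    and "\<forall>j<zlen (zsrc v). smap h j = smap f (smap v j)"
  shows "zcomp C f v = h \<longleftrightarrow>
    (\<forall>j<zlen (zsrc v). ssl f (smap v j) \<cdot> ssl v j = ssl h j) \<and>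
    (\<forall>k\<le>Suc n. rsl f k \<cdot> rsl v (degen i k) = rsl h k)"
  unfolding zcomp_eq_iff[OF assms] using hat_face[OF _ face_le] smap_face src_len tgt_len
  by simp

lemma reg_iso_face:
  assumes "\<forall>k\<le>Suc n. k \<noteq> i \<and> k \<noteq> Suc i \<longrightarrow> iso C (rsl f k)" "k \<le> n" "k \<noteq> i"
  shows "iso C (rsl f (face i k))"
  using assms by (auto simp: face_def)

definition cartesian_lift :: "('o,'m) zmap \<Rightarrow> (nat \<Rightarrow> nat) \<Rightarrow> ('o,'m) zmap" where
  "cartesian_lift h u = \<lparr>zsrc = zsrc h, ztgt = A,
     smap = \<lambda>j. if j < zlen (zsrc h) then u j else 0,
     rsl = \<lambda>k. if k = i then pullback_lift (rsl f i) (rsl f (Suc i)) (rsl h i) (rsl h (Suc i))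
               else if k \<le> n then cinv (rsl f (face i k)) \<cdot> rsl h (face i k) else undefined,
     ssl = \<lambda>j. if j < zlen (zsrc h) then cinv (ssl f (u j)) \<cdot> ssl h j else undefined\<rparr>"

context
  assumes sing_iso: "\<forall>j<n. iso C (ssl f j)"
    and reg_iso: "\<forall>k\<le>Suc n. k \<noteq> i \<and> k \<noteq> Suc i \<longrightarrow> iso C (rsl f k)"
    and pullback: "is_pullback C (rsl f i) (rsl f (Suc i)) (fwd B i) (bwd B i)"
begin

context
  fixes h :: "('o,'m) zmap" and u :: "nat \<Rightarrow> nat"
  assumes h: "is_zmap C h" "ztgt h = B"
    and u: "monotone_map (zlen (zsrc h)) n u"
    and h_smap: "\<forall>j<zlen (zsrc h). smap h j = face i (u j)"
begin

lemma u_less: "j < zlen (zsrc h) \<Longrightarrow> u j < n"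
  using u by (simp add: monotone_map_def)

lemma h_slices:
  shows h_rsl_hom: "k \<le> Suc n \<Longrightarrow>
      hom C (rsl h k) (reg (zsrc h) (hat (zlen (zsrc h)) u (degen i k))) (reg B k)"
    and h_ssl_hom: "j < zlen (zsrc h) \<Longrightarrow> hom C (ssl h j) (sing (zsrc h) j) (sing B (face i (u j)))"
  using h h_smap hat_face_comp[of "zlen (zsrc h)" "smap h" i u] tgt_len
  unfolding is_zmap_iff zmap_data_def by auto

lemma h_cospan: "fwd B i \<cdot> rsl h i = bwd B i \<cdot> rsl h (Suc i)"
proof -
  have "{j. j < zlen (zsrc h) \<and> smap h j = i} = {}"
    using h_smap by auto
  then show ?thesis
    using h face_le tgt_len unfolding is_zmap_iff zmap_commutes_def fibre_commutes_def Let_def by auto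
qed

lemma pullback_lift_of_h:
  shows "hom C (pullback_lift (rsl f i) (rsl f (Suc i)) (rsl h i) (rsl h (Suc i)))
      (reg (zsrc h) (hat (zlen (zsrc h)) u i)) (reg A i)"
    and "rsl f i \<cdot> pullback_lift (rsl f i) (rsl f (Suc i)) (rsl h i) (rsl h (Suc i)) = rsl h i"
    and "rsl f (Suc i) \<cdot> pullback_lift (rsl f i) (rsl f (Suc i)) (rsl h i) (rsl h (Suc i)) = rsl h (Suc i)"
proof -
  have "hom C (rsl h i) (reg (zsrc h) (hat (zlen (zsrc h)) u i)) (reg B i)"
    "hom C (rsl h (Suc i)) (reg (zsrc h) (hat (zlen (zsrc h)) u i)) (reg B (Suc i))"
    using h_rsl_hom[of i] h_rsl_hom[of "Suc i"] face_le by simp_all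
  note lift = pullback_lift[OF pullback tgt_fwd_hom[OF face_le] tgt_bwd_hom[OF face_le] this h_cospan]
  have "cdom C (rsl f i) = reg A i"
    using rsl_hom[of i] face_le by (simp add: hom_def)
  with lift show "hom C (pullback_lift (rsl f i) (rsl f (Suc i)) (rsl h i) (rsl h (Suc i)))
      (reg (zsrc h) (hat (zlen (zsrc h)) u i)) (reg A i)"
    by simp
  from lift show "rsl f i \<cdot> pullback_lift (rsl f i) (rsl f (Suc i)) (rsl h i) (rsl h (Suc i)) = rsl h i"
    "rsl f (Suc i) \<cdot> pullback_lift (rsl f i) (rsl f (Suc i)) (rsl h i) (rsl h (Suc i)) = rsl h (Suc i)"
    by simp_all
qed

lemma cartesian_lift_data: "zmap_data C (cartesian_lift h u)"
proof -
  let ?v = "cartesian_lift h u" and ?m = "zlen (zsrc h)"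
  have hat_v: "hat ?m (smap ?v) k = hat ?m u k" for k
    by (intro hat_cong) (simp add: cartesian_lift_def)
  have "hom C (rsl ?v k) (reg (zsrc h) (hat ?m u k)) (reg A k)" if "k \<le> n" for k
  proof (cases "k = i")
    case True
    then show ?thesis
      using pullback_lift_of_h(1) by (simp add: cartesian_lift_def)
  next
    case False
    have "face i k \<le> Suc n"
      using that by (simp add: face_def)
    then show ?thesis
      using comp_hom[OF h_rsl_hom cinv_hom[OF reg_iso_face[OF reg_iso that False] rsl_hom]] False that
      by (simp add: cartesian_lift_def)
  qed
  moreover have "hom C (ssl ?v j) (sing (zsrc h) j) (sing A (u j))" if "j < ?m" for j
    using comp_hom[OF h_ssl_hom cinv_hom[OF _ ssl_hom]] sing_iso u_less that
    by (simp add: cartesian_lift_def)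
  moreover have "zigzag C (zsrc h)"
    using h by (simp add: is_zmap_iff zmap_data_def)
  moreover have "monotone_map ?m n (smap ?v)"
    using u by (simp add: cartesian_lift_def monotone_map_def)
  ultimately show ?thesis
    using zigzag_src face_le src_len hat_v unfolding zmap_data_def
    by (auto simp: cartesian_lift_def)
qed

lemma zcomp_cartesian_lift: "zcomp C f (cartesian_lift h u) = h"
proof -
  let ?v = "cartesian_lift h u"
  have "rsl f k \<cdot> rsl ?v (degen i k) = rsl h k" if "k \<le> Suc n" for k
  proof (cases "degen i k = i")
    case True
    then show ?thesis
      using pullback_lift_of_h by (auto simp: cartesian_lift_def degen_eq_iff)
  next
    case False
    then have "k \<noteq> i" "k \<noteq> Suc i"
      by (auto simp: degen_eq_iff)
    then show ?thesis
      using comp_cinv_cancel[OF _ rsl_hom h_rsl_hom] reg_iso that False degen_le[OF face_le that]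
      by (simp add: cartesian_lift_def face_degen)
  qed
  moreover have "ssl f (u j) \<cdot> ssl ?v j = ssl h j" if "j < zlen (zsrc h)" for j
    using comp_cinv_cancel[OF _ ssl_hom h_ssl_hom] sing_iso u_less that
    by (simp add: cartesian_lift_def)
  moreover have "zmap_data C h"
    using h by (simp add: is_zmap_iff)
  ultimately show ?thesis
    using h h_smap smap_face u_less
    by (subst zcomp_eq_iff_face) (auto simp: cartesian_lift_def)
qed

lemma is_zmap_cartesian_lift: "is_zmap C (cartesian_lift h u)"
  using zcomp_reflects_commutes[OF sing_iso cartesian_lift_data] h(1) zcomp_cartesian_lift
    cartesian_lift_data
  by (simp add: is_zmap_iff cartesian_lift_def)

end

lemma zcomp_cancel_left:
  assumes v: "zmap_data C v" "ztgt v = A" and w: "zmap_data C w" "ztgt w = A"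
    and src: "zsrc v = zsrc w" and smap: "\<forall>j<zlen (zsrc v). smap v j = smap w j"
    and comp: "zcomp C f v = zcomp C f w"
  shows "v = w"
proof (rule zmap_eqI[OF v(1) w(1) src])
  define X m where "X = zsrc v" and "m = zlen (zsrc v)"
  have hat_w: "hat m (smap w) k = hat m (smap v) k" for k
    using smap by (intro hat_cong) (simp add: m_def)
  have vR: "hom C (rsl v k) (reg X (hat m (smap v) k)) (reg A k)"
    and wR: "hom C (rsl w k) (reg X (hat m (smap v) k)) (reg A k)" if "k \<le> n" for k
    using v w that src src_len hat_w unfolding zmap_data_def X_def m_def by auto
  have rsl_eq: "rsl f k \<cdot> rsl v (degen i k) = rsl f k \<cdot> rsl w (degen i k)" if "k \<le> Suc n" for k
    using arg_cong[OF comp, of "\<lambda>g. rsl g k"] zcomp_slices(3)[OF that] by metis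
  show "\<forall>k\<le>zlen (ztgt v). rsl v k = rsl w k"
  proof (intro allI impI)
    fix k assume "k \<le> zlen (ztgt v)"
    then have k: "k \<le> n"
      using v(2) src_len by simp
    show "rsl v k = rsl w k"
    proof (cases "k = i")
      case True
      have "cdom C (rsl f i) = reg A i"
        using rsl_hom[of i] face_le by (simp add: hom_def)
      then show ?thesis
        using pullback_jointly_monic[OF pullback, of "rsl v i" _ "rsl w i"] vR[OF k] wR[OF k]
          rsl_eq[of i] rsl_eq[of "Suc i"] face_le True by simp
    next
      case False
      have "face i k \<le> Suc n"
        using k by (simp add: face_def)
      then have "hom C (rsl f (face i k)) (reg A k) (reg B (face i k))"
        and "rsl f (face i k) \<cdot> rsl v k = rsl f (face i k) \<cdot> rsl w k"
        using rsl_hom rsl_eq by fastforce+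
      then show ?thesis
        using iso_cancel_left[OF reg_iso_face[OF reg_iso k False] _ vR[OF k] wR[OF k]] by simp
    qed
  qed
  show "\<forall>j<zlen (zsrc v). ssl v j = ssl w j"
  proof (intro allI impI)
    fix j assume j: "j < zlen (zsrc v)"
    then have less: "smap v j < n"
      using v(1,2) src_len unfolding zmap_data_def monotone_map_def by auto
    have "hom C (ssl v j) (sing X j) (sing A (smap v j))" "hom C (ssl w j) (sing X j) (sing A (smap v j))"
      using v w j src smap unfolding zmap_data_def X_def by auto
    moreover have "ssl f (smap v j) \<cdot> ssl v j = ssl f (smap v j) \<cdot> ssl w j"
      using arg_cong[OF comp, of "\<lambda>g. ssl g j"] zcomp_slices(2) j src smap by metis
    ultimately show "ssl v j = ssl w j"
      using iso_cancel_left[OF _ ssl_hom[OF less]] sing_iso less by blast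
  qed
qed (use v w smap in simp_all)

lemma cartesian_if_iso_pullback: "pi_cartesian C f"
  unfolding pi_cartesian_def
proof (intro allI impI)
  fix h u
  assume "is_zmap C h \<and> ztgt h = B \<and> monotone_map (zlen (zsrc h)) (zlen A) u \<and>
    (\<forall>j<zlen (zsrc h). smap f (u j) = smap h j)"
  then have h: "is_zmap C h" "ztgt h = B" and u: "monotone_map (zlen (zsrc h)) n u"
    and h_smap: "\<forall>j<zlen (zsrc h). smap h j = face i (u j)"
    using smap_face src_len by (auto simp: monotone_map_def)
  note lift = is_zmap_cartesian_lift[OF h u h_smap]
    zcomp_cartesian_lift[OF h u h_smap] cartesian_lift_data[OF h u h_smap]
  show "\<exists>!v. is_zmap C v \<and> zsrc v = zsrc h \<and> ztgt v = A \<and>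
      (\<forall>j<zlen (zsrc h). smap v j = u j) \<and> zcomp C f v = h"
  proof (rule ex1I)
    show "is_zmap C (cartesian_lift h u) \<and> zsrc (cartesian_lift h u) = zsrc h \<and>
        ztgt (cartesian_lift h u) = A \<and> (\<forall>j<zlen (zsrc h). smap (cartesian_lift h u) j = u j) \<and>
        zcomp C f (cartesian_lift h u) = h"
      using lift by (simp add: cartesian_lift_def)
    fix w
    assume "is_zmap C w \<and> zsrc w = zsrc h \<and> ztgt w = A \<and> (\<forall>j<zlen (zsrc h). smap w j = u j) \<and>
      zcomp C f w = h"
    then show "w = cartesian_lift h u"
      using zcomp_cancel_left[of w "cartesian_lift h u"] lift
      by (simp add: is_zmap_iff cartesian_lift_def)
  qed
qed

end

definition is_cone :: "'o \<Rightarrow> 'm \<Rightarrow> 'm \<Rightarrow> bool" where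
  "is_cone Q q1 q2 \<longleftrightarrow>
     hom C q1 Q (reg B i) \<and> hom C q2 Q (reg B (Suc i)) \<and> fwd B i \<cdot> q1 = bwd B i \<cdot> q2"

definition cone_rsl :: "'m \<Rightarrow> 'm \<Rightarrow> nat \<Rightarrow> 'm" where
  "cone_rsl q1 q2 k =
     (if k = i then q1 else if k = Suc i then q2 else if k \<le> Suc n then cid C (reg B k) else undefined)"

text \<open>B with r_i, s_i and r_(i+1) collapsed to Q; \<open>cone_map\<close> is the identity away from them.\<close>

definition cone_zigzag :: "'o \<Rightarrow> 'm \<Rightarrow> 'm \<Rightarrow> ('o,'m) zigzag" where
  "cone_zigzag Q q1 q2 = \<lparr>zlen = n, reg = \<lambda>k. if k = i then Q else reg B (face i k),
     sing = \<lambda>j. sing B (face i j),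
     fwd = \<lambda>j. fwd B (face i j) \<cdot> cone_rsl q1 q2 (face i j),
     bwd = \<lambda>j. bwd B (face i j) \<cdot> cone_rsl q1 q2 (Suc (face i j))\<rparr>"

definition cone_map :: "'o \<Rightarrow> 'm \<Rightarrow> 'm \<Rightarrow> ('o,'m) zmap" where
  "cone_map Q q1 q2 = \<lparr>zsrc = cone_zigzag Q q1 q2, ztgt = B,
     smap = \<lambda>j. if j < n then face i j else 0, rsl = cone_rsl q1 q2,
     ssl = \<lambda>j. if j < n then cid C (sing B (face i j)) else undefined\<rparr>"

lemma cone_zigzag_simps [simp]:
  "zlen (cone_zigzag Q q1 q2) = n" "sing (cone_zigzag Q q1 q2) j = sing B (face i j)"
  by (simp_all add: cone_zigzag_def)

lemma cone_rsl_hom: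
  assumes "is_cone Q q1 q2" "k \<le> Suc n"
  shows "hom C (cone_rsl q1 q2 k) (reg (cone_zigzag Q q1 q2) (degen i k)) (reg B k)"
proof -
  consider "k = i" | "k = Suc i" | "k \<noteq> i" "k \<noteq> Suc i"
    by blast
  then show ?thesis
  proof cases
    case 3
    then have "degen i k \<noteq> i"
      by (simp add: degen_eq_iff)
    then show ?thesis
      using 3 cid_hom[OF tgt_Ob(1)[OF assms(2)]] assms(2)
      by (simp add: cone_rsl_def cone_zigzag_def face_degen)
  qed (use assms(1) in \<open>simp_all add: is_cone_def cone_rsl_def cone_zigzag_def\<close>)
qed

lemma zigzag_cone:
  assumes "is_cone Q q1 q2"
  shows "zigzag C (cone_zigzag Q q1 q2)"
  unfolding zigzag_def
proof (intro conjI allI impI)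
  fix k assume "k \<le> zlen (cone_zigzag Q q1 q2)"
  then show "reg (cone_zigzag Q q1 q2) k \<in> Ob C"
    using assms hom_dom_Ob tgt_Ob(1)[of "face i k"]
    by (auto simp: is_cone_def cone_zigzag_def face_def)
next
  fix j assume j: "j < zlen (cone_zigzag Q q1 q2)"
  then have "j < n" "face i j \<le> n"
    by (auto simp: cone_zigzag_def face_def)
  then show "sing (cone_zigzag Q q1 q2) j \<in> Ob C"
    "hom C (fwd (cone_zigzag Q q1 q2) j) (reg (cone_zigzag Q q1 q2) j) (sing (cone_zigzag Q q1 q2) j)"
    "hom C (bwd (cone_zigzag Q q1 q2) j) (reg (cone_zigzag Q q1 q2) (Suc j)) (sing (cone_zigzag Q q1 q2) j)"
    using tgt_Ob(2)[of "face i j"]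
      comp_hom[OF cone_rsl_hom[OF assms, of "face i j"] tgt_fwd_hom[of "face i j"]]
      comp_hom[OF cone_rsl_hom[OF assms, of "Suc (face i j)"] tgt_bwd_hom[of "face i j"]]
    by (simp_all add: cone_zigzag_def)
qed

lemma is_zmap_cone_map:
  assumes "is_cone Q q1 q2"
  shows "is_zmap C (cone_map Q q1 q2)"
proof -
  let ?h = "cone_map Q q1 q2"
  have shape: "zlen (zsrc ?h) = n" "zlen (ztgt ?h) = Suc n" "\<forall>j<n. smap ?h j = face i j"
    using tgt_len by (simp_all add: cone_map_def cone_zigzag_def)
  have "zmap_data C ?h"
    unfolding zmap_data_face_iff[OF shape(1,2) face_le shape(3)]
    using zigzag_cone[OF assms] zigzag_tgt cone_rsl_hom[OF assms] face_le
      cid_hom[OF tgt_Ob(2)[OF face_less_Suc]]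
    by (simp add: cone_map_def cone_zigzag_def cone_rsl_def)
  moreover have "zmap_commutes C ?h"
  proof -
    let ?Y = "cone_zigzag Q q1 q2"
    have "cid C (sing B (face i j)) \<cdot> fwd ?Y j = fwd ?Y j"
      "cid C (sing B (face i j)) \<cdot> bwd ?Y j = bwd ?Y j" if "j < n" for j
      using comp_cid_left zigzag_homs[OF zigzag_cone[OF assms], of j] that
      by (simp_all add: cone_zigzag_def)
    moreover have "cone_rsl q1 q2 i = q1" "cone_rsl q1 q2 (Suc i) = q2"
      by (simp_all add: cone_rsl_def)
    ultimately show ?thesis
      unfolding zmap_commutes_face_iff[OF shape(1,2) face_le shape(3)] using assms
      by (simp add: cone_map_def is_cone_def) (simp add: cone_zigzag_def)
  qed
  ultimately show ?thesis
    by (simp add: is_zmap_iff)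
qed

lemma face_zmap_cone_map:
  assumes "is_cone Q q1 q2"
  shows "face_zmap C (cone_map Q q1 q2) n i"
  using category is_zmap_cone_map[OF assms] tgt_len face_le
  by (simp add: face_zmap_def face_zmap_axioms_def cat_def cone_map_def cone_zigzag_def)

lemma cone_map_sing_iso: "\<forall>j<n. iso C (ssl (cone_map Q q1 q2) j)"
  using iso_cid tgt_Ob(2) face_less_Suc by (simp add: cone_map_def)

lemma cartesian_vertical_lift:
  assumes "pi_cartesian C f" "is_zmap C h" "ztgt h = B" "zlen (zsrc h) = n"
    and "\<forall>j<n. smap h j = face i j"
  shows "\<exists>!v. is_zmap C v \<and> zsrc v = zsrc h \<and> ztgt v = A \<and> vertical v \<and> zcomp C f v = h"
proof -
  have "is_zmap C h \<and> ztgt h = B \<and> monotone_map (zlen (zsrc h)) (zlen A) (\<lambda>j. j) \<and>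
      (\<forall>j<zlen (zsrc h). smap f j = smap h j)"
    using assms(2-5) smap_face src_len by (simp add: monotone_map_def)
  note lift = assms(1)[unfolded pi_cartesian_def, rule_format, OF this]
  have vertical_iff: "vertical v \<longleftrightarrow> (\<forall>j<zlen (zsrc h). smap v j = j)"
    if "zsrc v = zsrc h" "ztgt v = A" for v
    using that assms(4) src_len by (simp add: vertical_def)
  have "(is_zmap C v \<and> zsrc v = zsrc h \<and> ztgt v = A \<and> vertical v \<and> zcomp C f v = h) \<longleftrightarrow>
      (is_zmap C v \<and> zsrc v = zsrc h \<and> ztgt v = A \<and> (\<forall>j<zlen (zsrc h). smap v j = j) \<and>
        zcomp C f v = h)" for v
    using vertical_iff by blast
  note eq = this
  show ?thesis
    unfolding eq by (rule lift)
qed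

lemma canonical_cone: "is_cone (reg A i) (rsl f i) (rsl f (Suc i))"
  using rsl_hom[of i] rsl_hom[of "Suc i"] face_le cospan_square by (simp add: is_cone_def)

abbreviation "canonical_zigzag \<equiv> cone_zigzag (reg A i) (rsl f i) (rsl f (Suc i))"
abbreviation "canonical_map \<equiv> cone_map (reg A i) (rsl f i) (rsl f (Suc i))"

definition cone_factor :: "('o,'m) zmap" where
  "cone_factor = \<lparr>zsrc = A, ztgt = canonical_zigzag,
     smap = \<lambda>j. if j < n then j else 0,
     rsl = \<lambda>k. if k = i then cid C (reg A i) else if k \<le> n then rsl f (face i k) else undefined,
     ssl = \<lambda>j. if j < n then ssl f j else undefined\<rparr>"

lemma vertical_cone_factor: "vertical cone_factor"
  using src_len by (simp add: vertical_def cone_factor_def cone_zigzag_def)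

lemma cone_factor_data: "zmap_data C cone_factor"
proof -
  have "hom C (rsl cone_factor k) (reg A k) (reg canonical_zigzag k)"
    if "k \<le> n" for k
  proof (cases "k = i")
    case True
    then show ?thesis
      using cid_hom zigzag_src face_le src_len
      by (simp add: cone_factor_def cone_zigzag_def zigzag_def)
  next
    case False
    have "face i k \<le> Suc n"
      using that by (simp add: face_def)
    then show ?thesis
      using rsl_hom[of "face i k"] False that by (simp add: cone_factor_def cone_zigzag_def)
  qed
  moreover have "hom C (ssl cone_factor j) (sing A j) (sing (ztgt cone_factor) j)" if "j < n" for j
    using ssl_hom that by (simp add: cone_factor_def)
  moreover have "zlen (zsrc cone_factor) = n"
    by (simp add: cone_factor_def src_len)
  ultimately show ?thesis
    using zigzag_src zigzag_cone[OF canonical_cone] face_le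
    unfolding zmap_data_vertical_iff[OF vertical_cone_factor \<open>zlen (zsrc cone_factor) = n\<close>]
    by (simp add: cone_factor_def)
qed

lemma zcomp_cone_factor: "zcomp C canonical_map cone_factor = f"
proof -
  interpret cone: face_zmap C canonical_map n i
    by (rule face_zmap_cone_map[OF canonical_cone])
  have "cone_rsl (rsl f i) (rsl f (Suc i)) k \<cdot> rsl cone_factor (degen i k) = rsl f k"
    if "k \<le> Suc n" for k
  proof -
    consider "k = i" | "k = Suc i" | "k \<noteq> i" "k \<noteq> Suc i"
      by blast
    then show ?thesis
    proof cases
      case 3
      then have "degen i k \<noteq> i"
        by (simp add: degen_eq_iff)
      then show ?thesis
        using 3 comp_cid_left[OF rsl_hom[OF that]] degen_le[OF face_le that]
        by (simp add: cone_rsl_def cone_factor_def face_degen that)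
    qed (use rsl_hom[of i] rsl_hom[of "Suc i"] face_le comp_cid_right in
        \<open>simp_all add: cone_rsl_def cone_factor_def\<close>)
  qed
  moreover have "cid C (sing B (face i j)) \<cdot> ssl f j = ssl f j" if "j < n" for j
    using comp_cid_left[OF ssl_hom[OF that]] .
  ultimately show ?thesis
  proof (intro iffD2[OF cone.zcomp_eq_iff_face] conjI allI impI)
    show "zmap_data C f"
      using is_zmap by (simp add: is_zmap_iff)
  qed (use smap_face src_len in \<open>simp_all add: cone_factor_def cone_map_def\<close>)
qed

lemma is_zmap_cone_factor: "is_zmap C cone_factor"
proof -
  interpret cone: face_zmap C canonical_map n i
    by (rule face_zmap_cone_map[OF canonical_cone])
  have "ztgt cone_factor = zsrc canonical_map"
    by (simp add: cone_factor_def cone_map_def)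
  then show ?thesis
    using cone.zcomp_reflects_commutes[OF cone_map_sing_iso cone_factor_data] cone_factor_data
      zcomp_cone_factor is_zmap
    by (simp add: is_zmap_iff)
qed

lemma canonical_lift:
  assumes "pi_cartesian C f"
  obtains v where "is_zmap C v" "zsrc v = canonical_zigzag"
    "ztgt v = A" "vertical v" "zcomp C f v = canonical_map"
    "zcomp C v cone_factor = zid C A"
proof -
  have "\<exists>!v. is_zmap C v \<and> zsrc v = zsrc canonical_map \<and> ztgt v = A \<and> vertical v \<and> zcomp C f v = canonical_map"
    using cartesian_vertical_lift[OF assms is_zmap_cone_map[OF canonical_cone]]
    by (simp add: cone_map_def)
  then obtain v where v: "is_zmap C v" "zsrc v = zsrc canonical_map" "ztgt v = A" "vertical v" "zcomp C f v = canonical_map"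
    by blast
  let ?w = "zcomp C v cone_factor"
  have src: "zsrc v = ztgt cone_factor"
    using v(2) by (simp add: cone_map_def cone_factor_def)
  have "zcomp C f ?w = zcomp C canonical_map cone_factor"
    using zcomp_assoc_vertical[OF _ _ cone_factor_data v(4) vertical_cone_factor _ src]
      is_zmap v(1,3,5) by (simp add: is_zmap_iff)
  then have "is_zmap C ?w \<and> zsrc ?w = A \<and> ztgt ?w = A \<and> vertical ?w \<and> zcomp C f ?w = f"
    using zcomp_vertical[OF v(1) is_zmap_cone_factor v(4) vertical_cone_factor src] v(3)
      zcomp_cone_factor by (simp add: cone_factor_def)
  moreover have "is_zmap C (zid C A) \<and> zsrc (zid C A) = A \<and> ztgt (zid C A) = A \<and>
      vertical (zid C A) \<and> zcomp C f (zid C A) = f"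
    using is_zmap_zid[OF zigzag_src] vertical_zid zcomp_zid[OF is_zmap] by (simp add: zid_def)
  ultimately have "?w = zid C A"
    using cartesian_vertical_lift[OF assms is_zmap refl src_len smap_face] by blast
  with v that show thesis
    by (simp add: cone_map_def)
qed

lemma cartesian_iso:
  assumes "pi_cartesian C f"
  shows cartesian_sing_iso: "\<forall>j<n. iso C (ssl f j)"
    and cartesian_reg_iso: "\<forall>k\<le>Suc n. k \<noteq> i \<and> k \<noteq> Suc i \<longrightarrow> iso C (rsl f k)"
proof -
  obtain v where v: "is_zmap C v" "zsrc v = canonical_zigzag" "ztgt v = A" "vertical v"
    "zcomp C f v = canonical_map" "zcomp C v cone_factor = zid C A"
    using canonical_lift[OF assms] .
  have lens: "zlen (zsrc v) = n"
    using v(2) by simp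
  note v_data = v(1)[unfolded is_zmap_iff zmap_data_vertical_iff[OF v(4) lens]]
  have left_inverse: "ssl v j \<cdot> ssl f j = cid C (sing A j)" "rsl v k \<cdot> rsl cone_factor k = cid C (reg A k)"
    if "j < n" "k \<le> n" for j k
    using arg_cong[OF v(6), of "\<lambda>w. ssl w j"] arg_cong[OF v(6), of "\<lambda>w. rsl w k"] that
      zcomp_vertical_slices[OF vertical_cone_factor, of j C v] zcomp_vertical_slices[OF v(4), of k C]
      lens src_len
    by (simp_all add: zid_def cone_factor_def)
  have right_inverse: "ssl f j \<cdot> ssl v j = cid C (sing B (face i j))"
    "rsl f k \<cdot> rsl v (degen i k) = cone_rsl (rsl f i) (rsl f (Suc i)) k"
    if "j < n" "k \<le> Suc n" for j k
    using arg_cong[OF v(5), of "\<lambda>w. ssl w j"] arg_cong[OF v(5), of "\<lambda>w. rsl w k"] that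
      zcomp_slices(2)[of j v] zcomp_slices(3)[of k v] v(4) lens
    by (simp_all add: cone_map_def vertical_def)
  show "\<forall>j<n. iso C (ssl f j)"
  proof (intro allI impI)
    fix j assume j: "j < n"
    have "hom C (ssl v j) (sing B (face i j)) (sing A j)"
      using v_data v(2,3) j by simp
    then show "iso C (ssl f j)"
      using isoI[OF ssl_hom[OF j]] left_inverse(1) right_inverse(1) j by blast
  qed
  show "\<forall>k\<le>Suc n. k \<noteq> i \<and> k \<noteq> Suc i \<longrightarrow> iso C (rsl f k)"
  proof (intro allI impI)
    fix k assume k: "k \<le> Suc n" "k \<noteq> i \<and> k \<noteq> Suc i"
    define d where "d = degen i k"
    have d: "d \<le> n" "d \<noteq> i" "face i d = k"
      using k degen_le[OF face_le k(1)] face_degen by (auto simp: d_def degen_eq_iff)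
    have "hom C (rsl v d) (reg canonical_zigzag d) (reg A d)"
      using v_data v(2,3) d(1) by simp
    then have "hom C (rsl v d) (reg B k) (reg A d)"
      using d by (simp add: cone_zigzag_def)
    moreover have "rsl v d \<cdot> rsl f k = cid C (reg A d)" "rsl f k \<cdot> rsl v d = cid C (reg B k)"
      using left_inverse(2)[OF _ d(1)] right_inverse(2)[OF _ k(1)] d k face_le
      by (auto simp: cone_factor_def cone_rsl_def d_def)
    ultimately show "iso C (rsl f k)"
      using isoI rsl_hom[OF k(1)] by (metis d_def)
  qed
qed

lemma vertical_lift_update:
  assumes sing_iso: "\<forall>j<n. iso C (ssl f j)"
    and v: "is_zmap C v" "ztgt v = A" "vertical v" and h: "is_zmap C h" "zcomp C f v = h"
    and u: "hom C u (reg (zsrc v) i) (reg A i)" "rsl f i \<cdot> u = rsl h i" "rsl f (Suc i) \<cdot> u = rsl h (Suc i)"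
  shows "is_zmap C (v\<lparr>rsl := (rsl v)(i := u)\<rparr>)" and "zcomp C f (v\<lparr>rsl := (rsl v)(i := u)\<rparr>) = h"
proof -
  let ?v = "v\<lparr>rsl := (rsl v)(i := u)\<rparr>"
  have lens: "zlen (zsrc v) = n" "zlen (zsrc ?v) = n"
    using v(2,3) src_len by (simp_all add: vertical_def)
  have vert: "vertical ?v"
    using v(3) by (simp add: vertical_def)
  have data: "zmap_data C ?v"
    using v(1,2) u(1) face_le
    unfolding is_zmap_iff zmap_data_vertical_iff[OF vert lens(2)] zmap_data_vertical_iff[OF v(3) lens(1)]
    by auto
  have "zcomp C f ?v = h"
  proof (intro iffD2[OF zcomp_eq_iff_face] conjI allI impI)
    show "zmap_data C h"
      using h(1) by (simp add: is_zmap_iff)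
    show "rsl f k \<cdot> rsl ?v (degen i k) = rsl h k" if "k \<le> Suc n" for k
      using u(2,3) zcomp_slices(3)[OF that, of v] h(2) by (auto simp: degen_eq_iff)
    show "zsrc h = zsrc ?v" "ztgt h = B"
      using h(2) by auto
    show "smap h j = smap f (smap ?v j)" "ssl f (smap ?v j) \<cdot> ssl ?v j = ssl h j"
      if "j < zlen (zsrc ?v)" for j
      using zcomp_slices(1,2)[of j v] that unfolding h(2)[symmetric] by simp_all
  qed
  moreover have "zmap_commutes C ?v"
    using zcomp_reflects_commutes[OF sing_iso data] v(2) h(1) calculation by simp
  ultimately show "is_zmap C ?v" "zcomp C f ?v = h"
    using data by (simp_all add: is_zmap_iff)
qed

lemma cartesian_pullback:
  assumes "pi_cartesian C f"
  shows "is_pullback C (rsl f i) (rsl f (Suc i)) (fwd B i) (bwd B i)"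
proof (rule is_pullbackI)
  show "hom C (rsl f i) (reg A i) (reg B i)" "hom C (rsl f (Suc i)) (reg A i) (reg B (Suc i))"
    using rsl_hom[of i] rsl_hom[of "Suc i"] face_le by simp_all
  show "hom C (fwd B i) (reg B i) (sing B i)" "hom C (bwd B i) (reg B (Suc i)) (sing B i)"
    using tgt_fwd_hom tgt_bwd_hom face_le by simp_all
  show "fwd B i \<cdot> rsl f i = bwd B i \<cdot> rsl f (Suc i)"
    by (rule cospan_square)
  fix Q q1 q2
  assume "hom C q1 Q (reg B i)" "hom C q2 Q (reg B (Suc i))" "fwd B i \<cdot> q1 = bwd B i \<cdot> q2"
  then have cone: "is_cone Q q1 q2"
    by (simp add: is_cone_def)
  let ?h = "cone_map Q q1 q2"
  have lift: "\<exists>!v. is_zmap C v \<and> zsrc v = zsrc ?h \<and> ztgt v = A \<and> vertical v \<and> zcomp C f v = ?h"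
    using cartesian_vertical_lift[OF assms is_zmap_cone_map[OF cone]] by (simp add: cone_map_def)
  then obtain v where v: "is_zmap C v" "zsrc v = zsrc ?h" "ztgt v = A" "vertical v" "zcomp C f v = ?h"
    by blast
  have reg_i: "reg (zsrc v) i = Q"
    using v(2) by (simp add: cone_map_def cone_zigzag_def)
  have rsl_h: "rsl ?h i = q1" "rsl ?h (Suc i) = q2"
    by (simp_all add: cone_map_def cone_rsl_def)
  have len: "zlen (zsrc v) = n"
    using v(2) by (simp add: cone_map_def)
  have v_i: "hom C (rsl v i) Q (reg A i)"
    using v(1,3) reg_i face_le unfolding is_zmap_iff zmap_data_vertical_iff[OF v(4) len] by auto
  have v_eqs: "rsl f i \<cdot> rsl v i = q1" "rsl f (Suc i) \<cdot> rsl v i = q2"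
    using zcomp_slices(3)[of i v] zcomp_slices(3)[of "Suc i" v] v(5) rsl_h face_le by simp_all
  show "\<exists>!u. hom C u Q (reg A i) \<and> rsl f i \<cdot> u = q1 \<and> rsl f (Suc i) \<cdot> u = q2"
  proof (rule ex1I)
    show "hom C (rsl v i) Q (reg A i) \<and> rsl f i \<cdot> rsl v i = q1 \<and> rsl f (Suc i) \<cdot> rsl v i = q2"
      using v_i v_eqs by simp
  next
    fix u
    assume u: "hom C u Q (reg A i) \<and> rsl f i \<cdot> u = q1 \<and> rsl f (Suc i) \<cdot> u = q2"
    let ?v = "v\<lparr>rsl := (rsl v)(i := u)\<rparr>"
    have "is_zmap C ?v" "zcomp C f ?v = ?h"
      using vertical_lift_update[OF cartesian_sing_iso[OF assms] v(1,3,4) is_zmap_cone_map[OF cone] v(5)]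
        u reg_i rsl_h by simp_all
    then have "is_zmap C ?v \<and> zsrc ?v = zsrc ?h \<and> ztgt ?v = A \<and> vertical ?v \<and> zcomp C f ?v = ?h"
      using v(2-4) by (simp add: vertical_def)
    moreover have "is_zmap C v \<and> zsrc v = zsrc ?h \<and> ztgt v = A \<and> vertical v \<and> zcomp C f v = ?h"
      using v by simp
    ultimately have "?v = v"
      using lift by (blast elim: ex1E)
    from arg_cong[OF this, of "\<lambda>w. rsl w i"] show "u = rsl v i"
      by simp
  qed
qed

end

theorem lemma4p1:
  fixes C :: "('o,'m) category" and f :: "('o,'m) zmap" and n i :: nat
  assumes "category C"
    and "is_zmap C f"
    and "zlen (zsrc f) = n" and "zlen (ztgt f) = Suc n"
    and "i \<le> n"
    and "\<forall>j<n. smap f j = face i j"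
  shows "pi_cartesian C f \<longleftrightarrow>
           ((\<forall>j<n. iso C (ssl f j)) \<and>
            (\<forall>j\<le>Suc n. j \<noteq> i \<and> j \<noteq> Suc i \<longrightarrow> iso C (rsl f j)) \<and>
            is_pullback C (rsl f i) (rsl f (Suc i)) (fwd (ztgt f) i) (bwd (ztgt f) i))"
proof -
  interpret face_zmap C f n i
    using assms by (simp add: face_zmap_def face_zmap_axioms_def cat_def)
  show ?thesis
  proof
    assume "pi_cartesian C f"
    then show "(\<forall>j<n. iso C (ssl f j)) \<and> (\<forall>j\<le>Suc n. j \<noteq> i \<and> j \<noteq> Suc i \<longrightarrow> iso C (rsl f j)) \<and>
        is_pullback C (rsl f i) (rsl f (Suc i)) (fwd B i) (bwd B i)"
      by (intro conjI cartesian_sing_iso cartesian_reg_iso cartesian_pullback)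
  next
    assume "(\<forall>j<n. iso C (ssl f j)) \<and> (\<forall>j\<le>Suc n. j \<noteq> i \<and> j \<noteq> Suc i \<longrightarrow> iso C (rsl f j)) \<and>
        is_pullback C (rsl f i) (rsl f (Suc i)) (fwd B i) (bwd B i)"
    then show "pi_cartesian C f"
      by (elim conjE) (rule cartesian_if_iso_pullback)
  qed
qed

end
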